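(* In the setting described in the context, for every node deployment $\mathbf{P}$, every cell partitioning $\mathbf{W}$ and every normalized flow matrix $\mathbf{S}$, $$\mathcal{D}(\mathbf{P},\mathbf{W},\mathbf{S})\ \ge\ \mathcal{D}\big(\mathbf{P},\mathcal{V}(\mathbf{P},\mathbf{S}),\mathbf{S}\big),$$ where $\mathcal{V}(\mathbf{P},\mathbf{S})$ is the generalized Voronoi diagram.
   Context: Let $\Omega\subset\mathbb{R}^2$ be a convex polygon (including its interior). Let $N,M\ge1$ be integers; $\mathcal{I_A}=\{1,\dots,N\}$ (access points, APs), $\mathcal{I_F}=\{N+1,\dots,N+M\}$ (fusion centers, FCs). A node deployment is $\mathbf{P}=(p_1,\dots,p_{N+M})$ with $p_n\in\Omega$. Let $f:\Omega\to\mathbb{R}^+$ be continuous and differentiable and $R_b>0$ a constant. A cell partitioning $\mathbf{W}=(W_1,\dots,W_N)$ is a partition of $\Omega$ into Borel sets; $v(W_n)=\int_{W_n}f(\omega)d\omega$. A normalized flow matrix $\mathbf{S}=[s_{i,j}]$, $i\in\mathcal{I_A}$, $j\in\mathcal{I_A}\cup\mathcal{I_F}$, satisfies $s_{i,j}\in[0,1]$, $\sum_{j=1}^{N+M}s_{i,j}=1$ for each $i$, and has no cycles: whenever $\prod_{k=1}^K s_{l_{k-1},l_k}>0$ then $s_{l_K,l_0}=0$ (in particular $s_{i,i}=0$). The flows $F_{i,j}(\mathbf{W},\mathbf{S})$ are the unique numbers with $F_{i,j}=s_{i,j}F_i$, where $F_i=\sum_{j=1}^{N+M}F_{i,j}=R_bv(W_i)+\sum_{j=1}^NF_{j,i}$.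 Positive constants $\eta_n$ ($n\in\mathcal{I_A}$), $\beta_{i,j}$ ($i\in\mathcal{I_A}$, $j\in\mathcal{I_A}\cup\mathcal{I_F}$), nonnegative constants $\rho_n$ ($n\in\mathcal{I_A}$) and $\lambda\ge0$ are given. The total communication power is $$\mathcal{D}(\mathbf{P},\mathbf{W},\mathbf{S})=\sum_{n=1}^N\int_{W_n}\eta_n\|p_n-\omega\|^2R_bf(\omega)d\omega+\lambda\Big[\sum_{i=1}^N\sum_{j=1}^{N+M}\beta_{i,j}\|p_i-p_j\|^2F_{i,j}+\sum_{n=1}^N\rho_n\Big(\sum_{i=1}^NF_{i,n}+R_bv(W_n)\Big)\Big].$$ AP power coefficient: for $n\in\mathcal{I_A}$, summing over all directed paths $L:n=l_0\to\cdots\to l_J$ with $l_0,\dots,l_{J-1}\in\mathcal{I_A}$, $l_J\in\mathcal{I_F}$, $\prod_i s_{l_{i-1},l_i}>0$, $g_n(\mathbf{P},\mathbf{S})=\sum_L\prod_{i=1}^Js_{l_{i-1},l_i}\big(\sum_{j=1}^J\beta_{l_{j-1},l_j}\|p_{l_{j-1}}-p_{l_j}\|^2+\sum_{j=1}^{J-1}\rho_{l_j}\big)$. Generalized Voronoi diagram: $\mathcal{V}(\mathbf{P},\mathbf{S})=(\mathcal{V}_1,\dots,\mathcal{V}_N)$ with $\mathcal{V}_n=\{\omega\in\Omega:\eta_n\|p_n-\omega\|^2+\lambda g_n(\mathbf{P},\mathbf{S})+\lambda\rho_n\le\eta_k\|p_k-\omega\|^2+\lambda g_k(\mathbf{P},\mathbf{S})+\lambda\rho_k\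 \forall k\ne n\}$, with ties broken in favor of the smaller index (so the $\mathcal{V}_n$ form a Borel partition of $\Omega$). *)

theory Defs
  imports "HOL-Analysis.Analysis"
begin

type_synonym pt = "real^2"

text \<open>Indices: APs are 1..N, FCs are N+1..N+M.  A flow matrix s :: nat => nat => real
  is read at rows i in {1..N} and columns j in {1..N+M}.\<close>

definition cell_partition :: "pt set \<Rightarrow> nat \<Rightarrow> (nat \<Rightarrow> pt set) \<Rightarrow> bool" where
  "cell_partition \<Omega> N W \<longleftrightarrow>
     (\<forall>n\<in>{1..N}. W n \<in> sets borel) \<and>
     (\<forall>n\<in>{1..N}. \<forall>m\<in>{1..N}. n \<noteq> m \<longrightarrow> W n \<inter> W m = {}) \<and>
     (\<Union>n\<in>{1..N}. W n) = \<Omega>"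

definition vol :: "(pt \<Rightarrow> real) \<Rightarrow> pt set \<Rightarrow> real" where
  "vol f A = (LINT \<omega>:A|lborel. f \<omega>)"

definition path_prod :: "(nat \<Rightarrow> nat \<Rightarrow> real) \<Rightarrow> nat list \<Rightarrow> real" where
  "path_prod s l = (\<Prod>k<length l - 1. s (l ! k) (l ! Suc k))"

definition flow_matrix :: "nat \<Rightarrow> nat \<Rightarrow> (nat \<Rightarrow> nat \<Rightarrow> real) \<Rightarrow> bool" where
  "flow_matrix N M s \<longleftrightarrow>
     (\<forall>i\<in>{1..N}. \<forall>j\<in>{1..N+M}. 0 \<le> s i j \<and> s i j \<le> 1) \<and>
     (\<forall>i\<in>{1..N}. (\<Sum>j=1..N+M. s i j) = 1) \<and>
     (\<forall>l. l \<noteq> [] \<and> set l \<subseteq> {1..N} \<and> path_prod s l > 0 \<longrightarrow> s (last l) (hd l) = 0)"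

text \<open>The flow equations; F is required to vanish outside the index domain so that
  "the unique numbers" can be expressed with THE.\<close>
definition flow_eqs :: "nat \<Rightarrow> nat \<Rightarrow> real \<Rightarrow> (pt \<Rightarrow> real) \<Rightarrow> (nat \<Rightarrow> pt set)
      \<Rightarrow> (nat \<Rightarrow> nat \<Rightarrow> real) \<Rightarrow> (nat \<Rightarrow> nat \<Rightarrow> real) \<Rightarrow> bool" where
  "flow_eqs N M Rb f W s F \<longleftrightarrow>
     (\<forall>i\<in>{1..N}. \<forall>j\<in>{1..N+M}. F i j = s i j * (\<Sum>j'=1..N+M. F i j')) \<and>
     (\<forall>i\<in>{1..N}. (\<Sum>j=1..N+M. F i j) = Rb * vol f (W i) + (\<Sum>j=1..N. F j i)) \<and>
     (\<forall>i j. \<not> (i \<in> {1..N} \<and> j \<in> {1..N+M}) \<longrightarrow> F i j = 0)"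

definition flows :: "nat \<Rightarrow> nat \<Rightarrow> real \<Rightarrow> (pt \<Rightarrow> real) \<Rightarrow> (nat \<Rightarrow> pt set)
      \<Rightarrow> (nat \<Rightarrow> nat \<Rightarrow> real) \<Rightarrow> (nat \<Rightarrow> nat \<Rightarrow> real)" where
  "flows N M Rb f W s = (THE F. flow_eqs N M Rb f W s F)"

definition Dpow :: "nat \<Rightarrow> nat \<Rightarrow> real \<Rightarrow> (pt \<Rightarrow> real) \<Rightarrow> (nat \<Rightarrow> real)
      \<Rightarrow> (nat \<Rightarrow> nat \<Rightarrow> real) \<Rightarrow> (nat \<Rightarrow> real) \<Rightarrow> real
      \<Rightarrow> (nat \<Rightarrow> pt) \<Rightarrow> (nat \<Rightarrow> pt set) \<Rightarrow> (nat \<Rightarrow> nat \<Rightarrow> real) \<Rightarrow> real" where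
  "Dpow N M Rb f \<eta> \<beta> \<rho> lam P W s =
     (let F = flows N M Rb f W s in
       (\<Sum>n=1..N. (LINT \<omega>:W n|lborel. \<eta> n * (norm (P n - \<omega>))\<^sup>2 * Rb * f \<omega>))
       + lam * ((\<Sum>i=1..N. \<Sum>j=1..N+M. \<beta> i j * (norm (P i - P j))\<^sup>2 * F i j)
             + (\<Sum>n=1..N. \<rho> n * ((\<Sum>i=1..N. F i n) + Rb * vol f (W n)))))"

definition ap_paths :: "nat \<Rightarrow> nat \<Rightarrow> (nat \<Rightarrow> nat \<Rightarrow> real) \<Rightarrow> nat \<Rightarrow> nat list set" where
  "ap_paths N M s n = {l. length l \<ge> 2 \<and> hd l = n \<and>
       (\<forall>k<length l - 1. l ! k \<in> {1..N}) \<and> last l \<in> {N+1..N+M} \<and> path_prod s l > 0}"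

definition gcoef :: "nat \<Rightarrow> nat \<Rightarrow> (nat \<Rightarrow> nat \<Rightarrow> real) \<Rightarrow> (nat \<Rightarrow> real)
      \<Rightarrow> (nat \<Rightarrow> pt) \<Rightarrow> (nat \<Rightarrow> nat \<Rightarrow> real) \<Rightarrow> nat \<Rightarrow> real" where
  "gcoef N M \<beta> \<rho> P s n =
     (\<Sum>l\<in>ap_paths N M s n. path_prod s l *
        ((\<Sum>j=1..length l - 1. \<beta> (l ! (j-1)) (l ! j) * (norm (P (l ! (j-1)) - P (l ! j)))\<^sup>2)
         + (\<Sum>j=1..length l - 2. \<rho> (l ! j))))"

definition gvor :: "pt set \<Rightarrow> nat \<Rightarrow> nat \<Rightarrow> (nat \<Rightarrow> real) \<Rightarrow> (nat \<Rightarrow> nat \<Rightarrow> real)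
      \<Rightarrow> (nat \<Rightarrow> real) \<Rightarrow> real \<Rightarrow> (nat \<Rightarrow> pt) \<Rightarrow> (nat \<Rightarrow> nat \<Rightarrow> real) \<Rightarrow> nat \<Rightarrow> pt set" where
  "gvor \<Omega> N M \<eta> \<beta> \<rho> lam P s n =
     (let c = (\<lambda>k \<omega>. \<eta> k * (norm (P k - \<omega>))\<^sup>2 + lam * gcoef N M \<beta> \<rho> P s k + lam * \<rho> k) in
      {\<omega>\<in>\<Omega>. (\<forall>k\<in>{1..N}. k < n \<longrightarrow> c n \<omega> < c k \<omega>) \<and>
             (\<forall>k\<in>{1..N}. n < k \<longrightarrow> c n \<omega> \<le> c k \<omega>)})"

end

theory Submission
  imports Defs
begin

text \<open>
  The flow graph of S is acyclic, so the flow equations can be solved by recursion along it,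
  and since the path products leaving an AP sum to 1 the path coefficients satisfy
  g_n = \<Sum>_j s_nj \<beta>_nj |p_n - p_j|^2 + \<Sum>_{j AP} s_nj (\<rho>_j + g_j).
  Summing this against flow conservation shows that every unit of traffic generated in W_n
  costs exactly g_n + \<rho>_n of relaying power, so
  D(P,W,S) = \<Sum>_n \<integral>_{W_n} (\<eta>_n |p_n - \<omega>|^2 + \<lambda> g_n + \<lambda> \<rho>_n) R_b f(\<omega>) d\<omega>.
  For fixed P and S this is an assignment problem with pointwise costs, minimised by giving
  each point to a cell of least cost, which is what the generalized Voronoi diagram does.
\<close>

lemma path_prod_Cons: "l \<noteq> [] \<Longrightarrow> path_prod s (i # l) = s i (hd l) * path_prod s l"
  by (cases l) (simp_all add: path_prod_def prod.lessThan_Suc_shift del: prod.lessThan_Suc)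

lemma path_prod_singleton [simp]: "path_prod s [i] = 1"
  by (simp add: path_prod_def)

definition path_cost :: "(nat \<Rightarrow> nat \<Rightarrow> real) \<Rightarrow> (nat \<Rightarrow> real) \<Rightarrow> (nat \<Rightarrow> pt) \<Rightarrow> nat list \<Rightarrow> real" where
  "path_cost \<beta> \<rho> P l =
     (\<Sum>j=1..length l - 1. \<beta> (l ! (j-1)) (l ! j) * (norm (P (l ! (j-1)) - P (l ! j)))\<^sup>2)
     + (\<Sum>j=1..length l - 2. \<rho> (l ! j))"

lemma gcoef_eq_sum_path_cost:
  "gcoef N M \<beta> \<rho> P s n = (\<Sum>l\<in>ap_paths N M s n. path_prod s l * path_cost \<beta> \<rho> P l)"
  unfolding gcoef_def path_cost_def ..

lemma path_cost_pair: "path_cost \<beta> \<rho> P [i, j] = \<beta> i j * (norm (P i - P j))\<^sup>2"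
  by (simp add: path_cost_def)

lemma path_cost_Cons:
  assumes "length l \<ge> 2"
  shows "path_cost \<beta> \<rho> P (i # l)
           = \<beta> i (hd l) * (norm (P i - P (hd l)))\<^sup>2 + \<rho> (hd l) + path_cost \<beta> \<rho> P l"
proof -
  obtain a b l' where "l = a # b # l'"
    using assms by (cases l; cases "tl l") auto
  then show ?thesis
    unfolding path_cost_def One_nat_def sum.atLeast1_atMost_eq
    by (simp add: sum.lessThan_Suc_shift del: sum.lessThan_Suc)
qed

lemma sum_filter_pos_mult:
  fixes a g :: "'a \<Rightarrow> real"
  assumes "finite X" "\<And>j. j \<in> X \<Longrightarrow> 0 \<le> a j"
  shows "(\<Sum>j\<in>{j\<in>X. 0 < a j}. a j * g j) = (\<Sum>j\<in>X. a j * g j)"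
  by (rule sum.mono_neutral_left) (use assms in \<open>auto simp: less_le\<close>)

lemma
  assumes "flow_eqs N M Rb f W s F"
  shows flow_eqs_split: "i \<in> {1..N} \<Longrightarrow> j \<in> {1..N+M} \<Longrightarrow> F i j = s i j * (\<Sum>k=1..N+M. F i k)"
    and flow_eqs_balance:
      "i \<in> {1..N} \<Longrightarrow> (\<Sum>j=1..N+M. F i j) = Rb * vol f (W i) + (\<Sum>j=1..N. F j i)"
    and flow_eqs_outside: "\<not> (i \<in> {1..N} \<and> j \<in> {1..N+M}) \<Longrightarrow> F i j = 0"
  using assms unfolding flow_eqs_def by blast+

locale flow_network =
  fixes N M :: nat and s :: "nat \<Rightarrow> nat \<Rightarrow> real"
  assumes flow_matrix: "flow_matrix N M s"
begin

lemma flow_nonneg: "i \<in> {1..N} \<Longrightarrow> j \<in> {1..N+M} \<Longrightarrow> 0 \<le> s i j"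
  using flow_matrix unfolding flow_matrix_def by blast

lemma flow_row_sum: "i \<in> {1..N} \<Longrightarrow> (\<Sum>j=1..N+M. s i j) = 1"
  using flow_matrix unfolding flow_matrix_def by blast

lemma flow_no_cycle:
  "l \<noteq> [] \<Longrightarrow> set l \<subseteq> {1..N} \<Longrightarrow> path_prod s l > 0 \<Longrightarrow> s (last l) (hd l) = 0"
  using flow_matrix unfolding flow_matrix_def by blast

definition successor_rel :: "nat rel" where
  "successor_rel = {(j, i). i \<in> {1..N} \<and> j \<in> {1..N} \<and> s i j > 0}"

lemma successor_rel_iff: "(j, i) \<in> successor_rel \<longleftrightarrow> i \<in> {1..N} \<and> j \<in> {1..N} \<and> s i j > 0"
  by (simp add: successor_rel_def)

lemma trancl_successor_rel_imp_path:
  assumes "(a, b) \<in> successor_rel\<^sup>+"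
  shows "\<exists>l. l \<noteq> [] \<and> set l \<subseteq> {1..N} \<and> hd l = b \<and> path_prod s l > 0 \<and> s (last l) a > 0"
  using assms
proof (induction rule: trancl_induct)
  case (base c)
  then show ?case by (intro exI[of _ "[c]"]) (auto simp: successor_rel_iff)
next
  case (step c d)
  then obtain l where "l \<noteq> []" "set l \<subseteq> {1..N}" "hd l = c" "path_prod s l > 0" "s (last l) a > 0"
    by blast
  with step.hyps(2) show ?case
    by (intro exI[of _ "d # l"]) (auto simp: successor_rel_iff path_prod_Cons)
qed

lemma acyclic_successor_rel: "acyclic successor_rel"
  unfolding acyclic_def
proof (intro allI notI)
  fix a assume "(a, a) \<in> successor_rel\<^sup>+"
  then obtain l where "l \<noteq> []" "set l \<subseteq> {1..N}" "hd l = a" "path_prod s l > 0" "s (last l) a > 0"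
    using trancl_successor_rel_imp_path by blast
  with flow_no_cycle show False by force
qed

lemma finite_successor_rel: "finite successor_rel"
  by (rule finite_subset[of _ "{1..N} \<times> {1..N}"]) (auto simp: successor_rel_def)

lemma wf_successor_rel: "wf successor_rel"
  using finite_acyclic_wf[OF finite_successor_rel acyclic_successor_rel] .

lemma wf_converse_successor_rel: "wf (successor_rel\<inverse>)"
  using finite_acyclic_wf_converse[OF finite_successor_rel acyclic_successor_rel] .

lemma inflow_recursion_solvable: "\<exists>T. \<forall>i\<in>{1..N}. T i = b i + (\<Sum>j=1..N. s j i * T j)"
proof -
  define T where "T = wfrec (successor_rel\<inverse>) (\<lambda>T i. b i + (\<Sum>j=1..N. s j i * T j))"
  have "T i = b i + (\<Sum>j=1..N. s j i * T j)" if i: "i \<in> {1..N}" for i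
  proof -
    have "T i = b i + (\<Sum>j=1..N. s j i * cut T (successor_rel\<inverse>) i j)"
      unfolding T_def by (rule wfrec[OF wf_converse_successor_rel])
    also have "\<dots> = b i + (\<Sum>j=1..N. s j i * T j)"
    proof (intro arg_cong2[where f = "(+)"] refl sum.cong)
      fix j assume j: "j \<in> {1..N}"
      show "s j i * cut T (successor_rel\<inverse>) i j = s j i * T j"
      proof (cases "s j i > 0")
        case True
        with i j show ?thesis by (simp add: cut_apply successor_rel_iff)
      next
        case False
        with flow_nonneg[of j i] i j show ?thesis by auto
      qed
    qed
    finally show ?thesis .
  qed
  then show ?thesis by blast
qed

lemma flow_eqs_exists: "\<exists>F. flow_eqs N M Rb f W s F"
proof -
  obtain T where T: "\<And>i. i \<in> {1..N} \<Longrightarrow> T i = Rb * vol f (W i) + (\<Sum>j=1..N. s j i * T j)"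
    using inflow_recursion_solvable[of "\<lambda>i. Rb * vol f (W i)"] by blast
  define F where "F i j = (if i \<in> {1..N} \<and> j \<in> {1..N+M} then s i j * T i else 0)" for i j
  have outflow: "(\<Sum>j=1..N+M. F i j) = T i" if "i \<in> {1..N}" for i
  proof -
    have "(\<Sum>j=1..N+M. F i j) = (\<Sum>j=1..N+M. s i j) * T i"
      unfolding sum_distrib_right by (rule sum.cong) (use that in \<open>auto simp: F_def\<close>)
    then show ?thesis using flow_row_sum[OF that] by simp
  qed
  have inflow: "(\<Sum>j=1..N. F j i) = (\<Sum>j=1..N. s j i * T j)" if "i \<in> {1..N}" for i
    by (rule sum.cong) (use that in \<open>auto simp: F_def\<close>)
  have "flow_eqs N M Rb f W s F"
    unfolding flow_eqs_def
  proof (intro conjI ballI allI impI)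
    fix i j assume ij: "i \<in> {1..N}" "j \<in> {1..N+M}"
    then have "F i j = s i j * T i" by (simp add: F_def)
    with outflow[OF ij(1)] show "F i j = s i j * (\<Sum>k=1..N+M. F i k)" by simp
  next
    fix i assume "i \<in> {1..N}"
    then show "(\<Sum>j=1..N+M. F i j) = Rb * vol f (W i) + (\<Sum>j=1..N. F j i)"
      using outflow inflow T by simp
  qed (auto simp: F_def)
  then show ?thesis by blast
qed

lemma flow_eqs_outflow_unique:
  assumes F: "flow_eqs N M Rb f W s F" and G: "flow_eqs N M Rb f W s G"
  shows "i \<in> {1..N} \<Longrightarrow> (\<Sum>j=1..N+M. F i j) = (\<Sum>j=1..N+M. G i j)"
proof (induction i rule: wf_induct[OF wf_converse_successor_rel])
  case (1 i)
  have "(\<Sum>j=1..N+M. F i j) - (\<Sum>j=1..N+M. G i j) = (\<Sum>j=1..N. F j i - G j i)"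
    using flow_eqs_balance[OF F 1(2)] flow_eqs_balance[OF G 1(2)] by (simp add: sum_subtractf)
  also have "\<dots> = (\<Sum>j=1..N. s j i * ((\<Sum>k=1..N+M. F j k) - (\<Sum>k=1..N+M. G j k)))"
  proof (intro sum.cong refl)
    fix j assume j: "j \<in> {1..N}"
    have "i \<in> {1..N+M}" using 1(2) by simp
    with j have "F j i = s j i * (\<Sum>k=1..N+M. F j k)" "G j i = s j i * (\<Sum>k=1..N+M. G j k)"
      by (simp_all only: flow_eqs_split[OF F] flow_eqs_split[OF G])
    then show "F j i - G j i = s j i * ((\<Sum>k=1..N+M. F j k) - (\<Sum>k=1..N+M. G j k))"
      by (simp add: right_diff_distrib)
  qed
  also have "\<dots> = 0"
  proof (rule sum.neutral, rule ballI)
    fix j assume j: "j \<in> {1..N}"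
    show "s j i * ((\<Sum>k=1..N+M. F j k) - (\<Sum>k=1..N+M. G j k)) = 0"
    proof (cases "s j i > 0")
      case True
      with 1 j show ?thesis by (simp add: successor_rel_iff)
    next
      case False
      with flow_nonneg[of j i] j 1(2) show ?thesis by auto
    qed
  qed
  finally show ?case by simp
qed

lemma flow_eqs_unique:
  assumes F: "flow_eqs N M Rb f W s F" and G: "flow_eqs N M Rb f W s G"
  shows "F = G"
proof (intro ext)
  fix i j
  show "F i j = G i j"
  proof (cases "i \<in> {1..N} \<and> j \<in> {1..N+M}")
    case True
    then show ?thesis
      using flow_eqs_split[OF F] flow_eqs_split[OF G] flow_eqs_outflow_unique[OF F G] by metis
  next
    case False
    then show ?thesis using flow_eqs_outside[OF F] flow_eqs_outside[OF G] by metis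
  qed
qed

lemma flow_eqs_flows: "flow_eqs N M Rb f W s (flows N M Rb f W s)"
  unfolding flows_def using flow_eqs_exists flow_eqs_unique by (metis theI')

abbreviation paths :: "nat \<Rightarrow> nat list set" where
  "paths \<equiv> ap_paths N M s"

lemma path_prod_nonneg:
  assumes "l \<noteq> []" "\<forall>k<length l - 1. l ! k \<in> {1..N}" "last l \<in> {1..N+M}"
  shows "0 \<le> path_prod s l"
  unfolding path_prod_def
proof (rule prod_nonneg)
  fix k assume k: "k \<in> {..<length l - 1}"
  have "l ! Suc k \<in> {1..N+M}"
  proof (cases "Suc k < length l - 1")
    case True
    then show ?thesis using assms(2) by fastforce
  next
    case False
    then have "Suc k = length l - 1" using k by auto
    then show ?thesis using assms(1,3) by (simp add: last_conv_nth)
  qed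
  then show "0 \<le> s (l ! k) (l ! Suc k)" using k assms(2) flow_nonneg by auto
qed

lemma length_ap_paths: "l \<in> paths n \<Longrightarrow> length l \<ge> 2"
  and hd_ap_paths: "l \<in> paths n \<Longrightarrow> hd l = n"
  by (simp_all add: ap_paths_def)

lemma ap_paths_start: "l \<in> paths n \<Longrightarrow> n \<in> {1..N}"
  using hd_conv_nth[of l] unfolding ap_paths_def by force

lemma pair_in_ap_paths_iff:
  "[n, j] \<in> paths m \<longleftrightarrow> m = n \<and> n \<in> {1..N} \<and> j \<in> {N+1..N+M} \<and> s n j > 0"
  by (auto simp: ap_paths_def path_prod_Cons)

lemma Cons_in_ap_paths_iff:
  assumes L: "length L \<ge> 2"
  shows "n # L \<in> paths m \<longleftrightarrow> m = n \<and> n \<in> {1..N} \<and> s n (hd L) > 0 \<and> L \<in> paths (hd L)"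
proof -
  have L_ne: "L \<noteq> []" using L by auto
  obtain r where r: "length L = Suc r" using L_ne by (cases L) auto
  have inner: "(\<forall>k<length (n # L) - 1. (n # L) ! k \<in> {1..N})
      \<longleftrightarrow> n \<in> {1..N} \<and> (\<forall>k<length L - 1. L ! k \<in> {1..N})"
    using r by (simp add: All_less_Suc2)
  have hd_L: "hd L \<in> {1..N}" if "\<forall>k<length L - 1. L ! k \<in> {1..N}"
    using that[rule_format, of 0] L L_ne by (simp add: hd_conv_nth)
  have prod: "path_prod s (n # L) = s n (hd L) * path_prod s L"
    using L_ne by (rule path_prod_Cons)
  have "0 < s n (hd L) \<and> 0 < path_prod s L"
    if "n \<in> {1..N}" "\<forall>k<length L - 1. L ! k \<in> {1..N}" "last L \<in> {N+1..N+M}"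
       "0 < s n (hd L) * path_prod s L"
  proof -
    have "0 \<le> s n (hd L)" using that(1) hd_L[OF that(2)] by (intro flow_nonneg) auto
    moreover have "0 \<le> path_prod s L" using that(2,3) L_ne by (intro path_prod_nonneg) auto
    ultimately show ?thesis using that(4) by (auto simp: zero_less_mult_iff)
  qed
  then show ?thesis
    using L L_ne inner prod unfolding ap_paths_def by auto
qed

lemma ap_paths_decompose:
  assumes n: "n \<in> {1..N}"
  shows "paths n = (\<lambda>j. [n, j]) ` {j\<in>{N+1..N+M}. s n j > 0}
                   \<union> Cons n ` (\<Union>j\<in>{j\<in>{1..N}. s n j > 0}. paths j)"
proof (intro equalityI subsetI)
  fix l assume l: "l \<in> paths n"
  then obtain L where lL: "l = n # L" and "L \<noteq> []"
    using length_ap_paths[OF l] hd_ap_paths[OF l] by (cases l) (auto simp: Suc_le_eq)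
  then consider j where "L = [j]" | "length L \<ge> 2"
    by (cases L; cases "tl L") auto
  then show "l \<in> (\<lambda>j. [n, j]) ` {j\<in>{N+1..N+M}. s n j > 0}
                   \<union> Cons n ` (\<Union>j\<in>{j\<in>{1..N}. s n j > 0}. paths j)"
  proof cases
    case 1
    then show ?thesis using l lL by (auto simp: pair_in_ap_paths_iff)
  next
    case 2
    then have "s n (hd L) > 0" "L \<in> paths (hd L)"
      using l lL Cons_in_ap_paths_iff[of L n n] by auto
    moreover have "hd L \<in> {1..N}" using ap_paths_start calculation(2) .
    ultimately show ?thesis using lL by blast
  qed
next
  fix l assume "l \<in> (\<lambda>j. [n, j]) ` {j\<in>{N+1..N+M}. s n j > 0}
                   \<union> Cons n ` (\<Union>j\<in>{j\<in>{1..N}. s n j > 0}. paths j)"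
  then show "l \<in> paths n"
    using n length_ap_paths hd_ap_paths
    by (auto simp: pair_in_ap_paths_iff Cons_in_ap_paths_iff)
qed

lemma finite_ap_paths: "finite (paths n)"
proof (induction n rule: wf_induct[OF wf_successor_rel])
  case (1 n)
  show ?case
  proof (cases "n \<in> {1..N}")
    case True
    with 1 have "finite (\<Union>j\<in>{j\<in>{1..N}. s n j > 0}. paths j)"
      by (auto simp: successor_rel_iff)
    then show ?thesis by (simp add: ap_paths_decompose[OF True])
  next
    case False
    then have "paths n = {}" using ap_paths_start by blast
    then show ?thesis by simp
  qed
qed

lemma sum_ap_paths:
  assumes n: "n \<in> {1..N}"
  shows "(\<Sum>l\<in>paths n. h l) = (\<Sum>j\<in>{j\<in>{N+1..N+M}. s n j > 0}. h [n, j])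
          + (\<Sum>j\<in>{j\<in>{1..N}. s n j > 0}. \<Sum>L\<in>paths j. h (n # L))"
proof -
  let ?A = "(\<lambda>j. [n, j]) ` {j\<in>{N+1..N+M}. s n j > 0}"
  let ?B = "\<Union>j\<in>{j\<in>{1..N}. s n j > 0}. paths j"
  have "finite ?B" using finite_ap_paths by auto
  moreover have "?A \<inter> Cons n ` ?B = {}"
    by (auto dest!: length_ap_paths)
  ultimately have "(\<Sum>l\<in>paths n. h l) = sum h ?A + sum h (Cons n ` ?B)"
    unfolding ap_paths_decompose[OF n] by (intro sum.union_disjoint) auto
  also have "sum h ?A = (\<Sum>j\<in>{j\<in>{N+1..N+M}. s n j > 0}. h [n, j])"
    by (subst sum.reindex) (auto simp: inj_on_def)
  also have "sum h (Cons n ` ?B) = (\<Sum>L\<in>?B. h (n # L))"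
    by (subst sum.reindex) (auto simp: inj_on_def)
  also have "\<dots> = (\<Sum>j\<in>{j\<in>{1..N}. s n j > 0}. \<Sum>L\<in>paths j. h (n # L))"
    by (rule sum.UNION_disjoint) (auto simp: finite_ap_paths dest: hd_ap_paths)
  finally show ?thesis .
qed

lemma path_prod_Cons_ap_paths:
  assumes L: "L \<in> paths j"
  shows "path_prod s (n # L) = s n j * path_prod s L"
proof -
  have "L \<noteq> []" using length_ap_paths[OF L] by auto
  then show ?thesis by (simp add: path_prod_Cons hd_ap_paths[OF L])
qed

lemma sum_path_prod_ap_paths: "n \<in> {1..N} \<Longrightarrow> (\<Sum>l\<in>paths n. path_prod s l) = 1"
proof (induction n rule: wf_induct[OF wf_successor_rel])
  case (1 n)
  have "(\<Sum>l\<in>paths n. path_prod s l) = (\<Sum>j\<in>{j\<in>{N+1..N+M}. s n j > 0}. s n j * 1)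
          + (\<Sum>j\<in>{j\<in>{1..N}. s n j > 0}. s n j * 1)"
    unfolding sum_ap_paths[OF 1(2)]
  proof (intro arg_cong2[where f = "(+)"] sum.cong refl)
    fix j assume "j \<in> {j\<in>{1..N}. s n j > 0}"
    with 1 have "(\<Sum>L\<in>paths j. path_prod s L) = 1" by (auto simp: successor_rel_iff)
    then show "(\<Sum>L\<in>paths j. path_prod s (n # L)) = s n j * 1"
      by (simp add: path_prod_Cons_ap_paths flip: sum_distrib_left)
  qed (simp add: path_prod_Cons)
  also have "\<dots> = (\<Sum>j=N+1..N+M. s n j * 1) + (\<Sum>j=1..N. s n j * 1)"
    using 1(2) by (subst (1 2) sum_filter_pos_mult) (auto intro: flow_nonneg)
  also have "\<dots> = (\<Sum>j=1..N+M. s n j)"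
    using sum.ub_add_nat[where m = 1 and n = N and p = M and g = "s n"] by simp
  finally show ?case using flow_row_sum[OF 1(2)] by simp
qed

lemma gcoef_rec:
  assumes n: "n \<in> {1..N}"
  shows "gcoef N M \<beta> \<rho> P s n = (\<Sum>j=1..N+M. s n j * (\<beta> n j * (norm (P n - P j))\<^sup>2))
           + (\<Sum>j=1..N. s n j * (\<rho> j + gcoef N M \<beta> \<rho> P s j))"
proof -
  let ?g = "gcoef N M \<beta> \<rho> P s" and ?d = "\<lambda>j. \<beta> n j * (norm (P n - P j))\<^sup>2"
  have "?g n = (\<Sum>j\<in>{j\<in>{N+1..N+M}. s n j > 0}. s n j * ?d j)
          + (\<Sum>j\<in>{j\<in>{1..N}. s n j > 0}. s n j * (?d j + (\<rho> j + ?g j)))"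
    unfolding gcoef_eq_sum_path_cost[where n = n] sum_ap_paths[OF n]
  proof (intro arg_cong2[where f = "(+)"] sum.cong refl)
    fix j assume j: "j \<in> {j\<in>{1..N}. s n j > 0}"
    have "(\<Sum>L\<in>paths j. path_prod s (n # L) * path_cost \<beta> \<rho> P (n # L))
        = (\<Sum>L\<in>paths j. s n j * ((?d j + \<rho> j) * path_prod s L + path_prod s L * path_cost \<beta> \<rho> P L))"
      by (intro sum.cong refl)
        (simp add: path_prod_Cons_ap_paths path_cost_Cons length_ap_paths hd_ap_paths algebra_simps)
    also have "\<dots> = s n j * ((?d j + \<rho> j) * (\<Sum>L\<in>paths j. path_prod s L)
                   + (\<Sum>L\<in>paths j. path_prod s L * path_cost \<beta> \<rho> P L))"
      by (simp add: sum_distrib_left sum.distrib distrib_left)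
    finally show "(\<Sum>L\<in>paths j. path_prod s (n # L) * path_cost \<beta> \<rho> P (n # L))
        = s n j * (?d j + (\<rho> j + ?g j))"
      using j sum_path_prod_ap_paths by (simp add: gcoef_eq_sum_path_cost)
  qed (simp add: path_prod_Cons path_cost_pair)
  also have "\<dots> = (\<Sum>j=N+1..N+M. s n j * ?d j) + (\<Sum>j=1..N. s n j * (?d j + (\<rho> j + ?g j)))"
    using n by (subst (1 2) sum_filter_pos_mult) (auto intro: flow_nonneg)
  also have "\<dots> = (\<Sum>j=1..N+M. s n j * ?d j) + (\<Sum>j=1..N. s n j * (\<rho> j + ?g j))"
    using sum.ub_add_nat[where m = 1 and n = N and p = M and g = "\<lambda>j. s n j * ?d j"]
    by (simp add: algebra_simps sum.distrib)
  finally show ?thesis .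
qed

end

lemma flow_eqs_potential:
  assumes F: "flow_eqs N M Rb f W s F"
  shows "(\<Sum>i=1..N. (\<Sum>j=1..N+M. F i j) * (h i - (\<Sum>j=1..N. s i j * h j)))
         = (\<Sum>i=1..N. h i * (Rb * vol f (W i)))"
proof -
  let ?T = "\<lambda>i. \<Sum>j=1..N+M. F i j"
  have "(\<Sum>i=1..N. ?T i * (\<Sum>j=1..N. s i j * h j)) = (\<Sum>i=1..N. \<Sum>j=1..N. F i j * h j)"
  proof (intro sum.cong refl)
    fix i assume i: "i \<in> {1..N}"
    show "?T i * (\<Sum>j=1..N. s i j * h j) = (\<Sum>j=1..N. F i j * h j)"
      unfolding sum_distrib_left
    proof (intro sum.cong refl)
      fix j assume "j \<in> {1..N}"
      then have "F i j = s i j * ?T i" using i by (intro flow_eqs_split[OF F]) auto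
      then show "?T i * (s i j * h j) = F i j * h j" by simp
    qed
  qed
  also have "\<dots> = (\<Sum>i=1..N. (\<Sum>j=1..N. F j i) * h i)"
    by (subst sum.swap) (simp add: sum_distrib_right)
  finally have inflow: "(\<Sum>i=1..N. ?T i * (\<Sum>j=1..N. s i j * h j)) = (\<Sum>i=1..N. (\<Sum>j=1..N. F j i) * h i)" .
  have "(\<Sum>i=1..N. ?T i * (h i - (\<Sum>j=1..N. s i j * h j))) = (\<Sum>i=1..N. (?T i - (\<Sum>j=1..N. F j i)) * h i)"
    using inflow by (simp add: right_diff_distrib left_diff_distrib sum_subtractf mult.commute)
  also have "\<dots> = (\<Sum>i=1..N. h i * (Rb * vol f (W i)))"
    using flow_eqs_balance[OF F] by (intro sum.cong refl) simp
  finally show ?thesis .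
qed

lemma (in flow_network) relay_power_eq:
  fixes Rb :: real and f :: "pt \<Rightarrow> real" and W :: "nat \<Rightarrow> pt set"
  defines "F \<equiv> flows N M Rb f W s"
  shows "(\<Sum>i=1..N. \<Sum>j=1..N+M. \<beta> i j * (norm (P i - P j))\<^sup>2 * F i j)
          + (\<Sum>n=1..N. \<rho> n * ((\<Sum>i=1..N. F i n) + Rb * vol f (W n)))
         = (\<Sum>n=1..N. (gcoef N M \<beta> \<rho> P s n + \<rho> n) * (Rb * vol f (W n)))"
proof -
  let ?T = "\<lambda>i. \<Sum>j=1..N+M. F i j" and ?h = "\<lambda>n. gcoef N M \<beta> \<rho> P s n + \<rho> n"
  have F: "flow_eqs N M Rb f W s F" unfolding F_def by (rule flow_eqs_flows)
  have "(\<Sum>i=1..N. \<Sum>j=1..N+M. \<beta> i j * (norm (P i - P j))\<^sup>2 * F i j)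
        = (\<Sum>i=1..N. ?T i * (\<Sum>j=1..N+M. s i j * (\<beta> i j * (norm (P i - P j))\<^sup>2)))"
  proof (intro sum.cong refl)
    fix i assume i: "i \<in> {1..N}"
    show "(\<Sum>j=1..N+M. \<beta> i j * (norm (P i - P j))\<^sup>2 * F i j)
          = ?T i * (\<Sum>j=1..N+M. s i j * (\<beta> i j * (norm (P i - P j))\<^sup>2))"
      unfolding sum_distrib_left
    proof (intro sum.cong refl)
      fix j assume "j \<in> {1..N+M}"
      with i have "F i j = s i j * ?T i" by (rule flow_eqs_split[OF F])
      then show "\<beta> i j * (norm (P i - P j))\<^sup>2 * F i j
          = ?T i * (s i j * (\<beta> i j * (norm (P i - P j))\<^sup>2))" by simp
    qed
  qed
  moreover have "(\<Sum>n=1..N. \<rho> n * ((\<Sum>i=1..N. F i n) + Rb * vol f (W n))) = (\<Sum>n=1..N. ?T n * \<rho> n)"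
    using flow_eqs_balance[OF F] by (intro sum.cong refl) simp
  ultimately have "(\<Sum>i=1..N. \<Sum>j=1..N+M. \<beta> i j * (norm (P i - P j))\<^sup>2 * F i j)
          + (\<Sum>n=1..N. \<rho> n * ((\<Sum>i=1..N. F i n) + Rb * vol f (W n)))
        = (\<Sum>i=1..N. ?T i * ((\<Sum>j=1..N+M. s i j * (\<beta> i j * (norm (P i - P j))\<^sup>2)) + \<rho> i))"
    by (simp add: distrib_left sum.distrib)
  also have "\<dots> = (\<Sum>i=1..N. ?T i * (?h i - (\<Sum>j=1..N. s i j * ?h j)))"
  proof (intro sum.cong refl)
    fix i assume "i \<in> {1..N}"
    from gcoef_rec[OF this, of \<beta> \<rho> P]
    show "?T i * ((\<Sum>j=1..N+M. s i j * (\<beta> i j * (norm (P i - P j))\<^sup>2)) + \<rho> i)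
        = ?T i * (?h i - (\<Sum>j=1..N. s i j * ?h j))"
      by (simp add: add.commute)
  qed
  also have "\<dots> = (\<Sum>n=1..N. ?h n * (Rb * vol f (W n)))"
    using F by (rule flow_eqs_potential)
  finally show ?thesis .
qed

lemma set_integrable_continuous_on_compact:
  fixes g :: "'a::euclidean_space \<Rightarrow> real"
  assumes "compact \<Omega>" "continuous_on \<Omega> g" "A \<in> sets borel" "A \<subseteq> \<Omega>"
  shows "set_integrable lborel A g"
proof -
  have "set_integrable lborel \<Omega> g"
    using borel_integrable_compact[OF assms(1,2)] by (simp add: set_integrable_def)
  then show ?thesis by (rule set_integrable_subset) (use assms in auto)
qed

lemma Dpow_eq_sum_set_integral:
  assumes S: "flow_matrix N M s"
    and int_dist: "\<And>n. n \<in> {1..N} \<Longrightarrow>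
                     set_integrable lborel (W n) (\<lambda>\<omega>. \<eta> n * (norm (P n - \<omega>))\<^sup>2 * Rb * f \<omega>)"
    and int_f: "\<And>n. n \<in> {1..N} \<Longrightarrow> set_integrable lborel (W n) f"
  shows "Dpow N M Rb f \<eta> \<beta> \<rho> lam P W s
    = (\<Sum>n=1..N. LINT \<omega>:W n|lborel.
         (\<eta> n * (norm (P n - \<omega>))\<^sup>2 + lam * gcoef N M \<beta> \<rho> P s n + lam * \<rho> n) * Rb * f \<omega>)"
proof -
  interpret flow_network N M s by (rule flow_network.intro[OF S])
  let ?d = "\<lambda>n \<omega>. \<eta> n * (norm (P n - \<omega>))\<^sup>2 * Rb * f \<omega>"
    and ?c = "\<lambda>n. lam * (gcoef N M \<beta> \<rho> P s n + \<rho> n) * Rb"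
  have "Dpow N M Rb f \<eta> \<beta> \<rho> lam P W s
     = (\<Sum>n=1..N. (LINT \<omega>:W n|lborel. ?d n \<omega>) + ?c n * vol f (W n))"
    unfolding Dpow_def Let_def relay_power_eq
    by (simp add: sum.distrib sum_distrib_left algebra_simps)
  also have "\<dots> = (\<Sum>n=1..N. LINT \<omega>:W n|lborel. ?d n \<omega> + ?c n * f \<omega>)"
    using int_dist int_f by (intro sum.cong refl) (simp add: set_integral_add(2) vol_def)
  also have "\<dots> = (\<Sum>n=1..N. LINT \<omega>:W n|lborel.
         (\<eta> n * (norm (P n - \<omega>))\<^sup>2 + lam * gcoef N M \<beta> \<rho> P s n + lam * \<rho> n) * Rb * f \<omega>)"
    by (simp add: algebra_simps)
  finally show ?thesis .
qed

lemma Dpow_eq_sum_cell_integral: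
  assumes S: "flow_matrix N M s" and \<Omega>: "compact \<Omega>" and f: "continuous_on \<Omega> f"
    and U: "cell_partition \<Omega> N U"
  shows "Dpow N M Rb f \<eta> \<beta> \<rho> lam P U s
    = (\<Sum>n=1..N. LINT \<omega>:U n|lborel.
         (\<eta> n * (norm (P n - \<omega>))\<^sup>2 + lam * gcoef N M \<beta> \<rho> P s n + lam * \<rho> n) * Rb * f \<omega>)"
proof (rule Dpow_eq_sum_set_integral[OF S])
  fix n assume "n \<in> {1..N}"
  then have "U n \<in> sets borel" "U n \<subseteq> \<Omega>" using U unfolding cell_partition_def by auto
  with \<Omega> f show "set_integrable lborel (U n) (\<lambda>\<omega>. \<eta> n * (norm (P n - \<omega>))\<^sup>2 * Rb * f \<omega>)"
    and "set_integrable lborel (U n) f"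
    by (auto intro!: set_integrable_continuous_on_compact[of \<Omega>] continuous_intros)
qed

definition argmin_cell :: "'a set \<Rightarrow> nat \<Rightarrow> (nat \<Rightarrow> 'a \<Rightarrow> real) \<Rightarrow> nat \<Rightarrow> 'a set" where
  "argmin_cell \<Omega> N c n =
     {\<omega>\<in>\<Omega>. (\<forall>k\<in>{1..N}. k < n \<longrightarrow> c n \<omega> < c k \<omega>) \<and> (\<forall>k\<in>{1..N}. n < k \<longrightarrow> c n \<omega> \<le> c k \<omega>)}"

lemma argmin_cell_le: "\<omega> \<in> argmin_cell \<Omega> N c k \<Longrightarrow> n \<in> {1..N} \<Longrightarrow> c k \<omega> \<le> c n \<omega>"
  unfolding argmin_cell_def by (cases n k rule: linorder_cases) force+

lemma disjoint_family_argmin_cell: "disjoint_family_on (argmin_cell \<Omega> N c) {1..N}"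
proof -
  have "argmin_cell \<Omega> N c m \<inter> argmin_cell \<Omega> N c n = {}"
    if mn: "m \<in> {1..N}" "n \<in> {1..N}" "m < n" for m n
  proof (intro equalityI subsetI)
    fix \<omega> assume \<omega>: "\<omega> \<in> argmin_cell \<Omega> N c m \<inter> argmin_cell \<Omega> N c n"
    then have "c n \<omega> < c m \<omega>" using mn unfolding argmin_cell_def by blast
    moreover have "c m \<omega> \<le> c n \<omega>" using \<omega> mn(2) by (blast intro: argmin_cell_le)
    ultimately show "\<omega> \<in> {}" by simp
  qed simp
  then show ?thesis
    unfolding disjoint_family_on_def by (metis Int_commute linorder_neqE_nat)
qed

lemma UN_argmin_cell:
  assumes "N \<ge> 1"
  shows "(\<Union>n\<in>{1..N}. argmin_cell \<Omega> N c n) = \<Omega>"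
proof (intro equalityI subsetI)
  fix \<omega> assume \<omega>: "\<omega> \<in> \<Omega>"
  let ?is_min = "\<lambda>k. k \<in> {1..N} \<and> (\<forall>j\<in>{1..N}. c k \<omega> \<le> c j \<omega>)"
  have "?is_min (arg_min_on (\<lambda>k. c k \<omega>) {1..N})"
    using assms arg_min_if_finite(1)[of "{1..N}"]
      arg_min_least[where f = "\<lambda>k. c k \<omega>" and S = "{1..N}"] by auto
  then have "?is_min (LEAST k. ?is_min k)" by (rule LeastI)
  moreover have "c (LEAST k. ?is_min k) \<omega> < c j \<omega>" if "j \<in> {1..N}" "j < (LEAST k. ?is_min k)" for j
    using not_less_Least[OF that(2)] that(1) calculation by (auto simp: not_le)
  ultimately show "\<omega> \<in> (\<Union>n\<in>{1..N}. argmin_cell \<Omega> N c n)"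
    using \<omega> unfolding argmin_cell_def by blast
qed (auto simp: argmin_cell_def)

lemma argmin_cell_borel:
  fixes c :: "nat \<Rightarrow> 'a::topological_space \<Rightarrow> real"
  assumes "\<Omega> \<in> sets borel" and [measurable]: "\<And>k. c k \<in> borel_measurable borel"
  shows "argmin_cell \<Omega> N c n \<in> sets borel"
proof -
  have "{\<omega>\<in>space borel. (\<forall>k\<in>{1..N}. k < n \<longrightarrow> c n \<omega> < c k \<omega>)
                       \<and> (\<forall>k\<in>{1..N}. n < k \<longrightarrow> c n \<omega> \<le> c k \<omega>)} \<in> sets borel"
    by measurable
  then show ?thesis
    using assms(1) by (auto simp: argmin_cell_def Collect_conj_eq[symmetric] Int_def)
qed

lemma cell_partition_argmin_cell:
  assumes "N \<ge> 1" "\<Omega> \<in> sets borel" "\<And>k. continuous_on UNIV (c k)"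
  shows "cell_partition \<Omega> N (argmin_cell \<Omega> N c)"
  using assms disjoint_family_argmin_cell[of \<Omega> N c] UN_argmin_cell[of N \<Omega> c]
  unfolding cell_partition_def disjoint_family_on_def
  by (auto intro!: argmin_cell_borel borel_measurable_continuous_onI)

lemma sum_set_integral_argmin_partition_le:
  fixes \<phi> :: "nat \<Rightarrow> 'a \<Rightarrow> real"
  assumes I: "finite I"
    and V: "disjoint_family_on V I" "\<And>n. n \<in> I \<Longrightarrow> V n \<in> sets M" "(\<Union>n\<in>I. V n) = \<Omega>"
    and W: "disjoint_family_on W I" "\<And>n. n \<in> I \<Longrightarrow> W n \<in> sets M" "(\<Union>n\<in>I. W n) = \<Omega>"
    and int: "\<And>n. n \<in> I \<Longrightarrow> set_integrable M \<Omega> (\<phi> n)"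
    and min: "\<And>k n \<omega>. k \<in> I \<Longrightarrow> n \<in> I \<Longrightarrow> \<omega> \<in> V k \<Longrightarrow> \<phi> k \<omega> \<le> \<phi> n \<omega>"
  shows "(\<Sum>n\<in>I. LINT \<omega>:V n|M. \<phi> n \<omega>) \<le> (\<Sum>n\<in>I. LINT \<omega>:W n|M. \<phi> n \<omega>)"
proof -
  have \<Omega>: "\<Omega> \<in> sets M" using I V(2,3) by blast
  define m where "m \<omega> = (\<Sum>k\<in>I. indicator (V k) \<omega> *\<^sub>R \<phi> k \<omega>)" for \<omega>
  have m_V: "m \<omega> = \<phi> n \<omega>" if "n \<in> I" "\<omega> \<in> V n" for n \<omega>
  proof -
    have "m \<omega> = (\<Sum>k\<in>I. if k = n then \<phi> n \<omega> else 0)"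
      unfolding m_def using V(1) that
      by (intro sum.cong refl) (auto simp: disjoint_family_on_def indicator_def)
    then show ?thesis using I that by simp
  qed
  have m_le: "m \<omega> \<le> \<phi> n \<omega>" if "n \<in> I" "\<omega> \<in> \<Omega>" for n \<omega>
    using that V(3) m_V min by (metis UN_E)
  have "set_integrable M (V k) (\<phi> k)" if "k \<in> I" for k
    using V(3) that by (intro set_integrable_subset[OF int[OF that] V(2)[OF that]]) auto
  then have "integrable M m"
    unfolding m_def set_integrable_def by (intro Bochner_Integration.integrable_sum)
  then have int_m: "set_integrable M A m" if "A \<in> sets M" for A
    unfolding set_integrable_def by (rule integrable_mult_indicator[OF that])
  have "(\<Sum>n\<in>I. LINT \<omega>:V n|M. \<phi> n \<omega>) = (\<Sum>n\<in>I. LINT \<omega>:V n|M. m \<omega>)"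
    using V(2) m_V by (intro sum.cong refl set_lebesgue_integral_cong) auto
  also have "\<dots> = (LINT \<omega>:\<Omega>|M. m \<omega>)"
    using set_integral_finite_Union[OF I V(1) int_m[OF V(2)] V(2)] V(3) by simp
  also have "\<dots> = (\<Sum>n\<in>I. LINT \<omega>:W n|M. m \<omega>)"
    using set_integral_finite_Union[OF I W(1) int_m[OF W(2)] W(2)] W(3) by simp
  also have "\<dots> \<le> (\<Sum>n\<in>I. LINT \<omega>:W n|M. \<phi> n \<omega>)"
  proof (rule sum_mono)
    fix n assume n: "n \<in> I"
    have "W n \<subseteq> \<Omega>" using W(3) n by blast
    then show "(LINT \<omega>:W n|M. m \<omega>) \<le> (LINT \<omega>:W n|M. \<phi> n \<omega>)"
      using m_le n
      by (intro set_integral_mono int_m W(2) set_integrable_subset[OF int[OF n] W(2)[OF n]]) auto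
  qed
  finally show ?thesis .
qed

theorem proposition1:
  fixes \<Omega> :: "pt set" and N M :: nat and f :: "pt \<Rightarrow> real" and Rb lam :: real
    and \<eta> \<rho> :: "nat \<Rightarrow> real" and \<beta> :: "nat \<Rightarrow> nat \<Rightarrow> real"
    and P :: "nat \<Rightarrow> pt" and W :: "nat \<Rightarrow> pt set" and s :: "nat \<Rightarrow> nat \<Rightarrow> real"
  assumes poly: "polytope \<Omega>" and int: "interior \<Omega> \<noteq> {}"
    and NM: "N \<ge> 1" "M \<ge> 1"
    and fcont: "continuous_on \<Omega> f" and fdiff: "f differentiable_on \<Omega>"
    and fpos: "\<forall>\<omega>\<in>\<Omega>. f \<omega> > 0"
    and Rb: "Rb > 0"
    and eta: "\<forall>n\<in>{1..N}. \<eta> n > 0"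
    and beta: "\<forall>i\<in>{1..N}. \<forall>j\<in>{1..N+M}. \<beta> i j > 0"
    and rho: "\<forall>n\<in>{1..N}. \<rho> n \<ge> 0"
    and lam: "lam \<ge> 0"
    and P: "\<forall>n\<in>{1..N+M}. P n \<in> \<Omega>"
    and W: "cell_partition \<Omega> N W"
    and S: "flow_matrix N M s"
  shows "Dpow N M Rb f \<eta> \<beta> \<rho> lam P W s
         \<ge> Dpow N M Rb f \<eta> \<beta> \<rho> lam P (gvor \<Omega> N M \<eta> \<beta> \<rho> lam P s) s"
proof -
  define c where "c k \<omega> = \<eta> k * (norm (P k - \<omega>))\<^sup>2 + lam * gcoef N M \<beta> \<rho> P s k + lam * \<rho> k" for k \<omega>
  have \<Omega>: "compact \<Omega>" "\<Omega> \<in> sets borel"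
    using polytope_imp_compact[OF poly] by (auto intro: borel_closed compact_imp_closed)
  have V_eq: "gvor \<Omega> N M \<eta> \<beta> \<rho> lam P s = argmin_cell \<Omega> N c"
    unfolding gvor_def argmin_cell_def c_def Let_def ..
  have V: "cell_partition \<Omega> N (argmin_cell \<Omega> N c)"
    unfolding c_def using NM \<Omega> by (intro cell_partition_argmin_cell) (auto intro!: continuous_intros)
  have "(\<Sum>n=1..N. LINT \<omega>:argmin_cell \<Omega> N c n|lborel. c n \<omega> * Rb * f \<omega>)
        \<le> (\<Sum>n=1..N. LINT \<omega>:W n|lborel. c n \<omega> * Rb * f \<omega>)"
  proof (rule sum_set_integral_argmin_partition_le)
    show "set_integrable lborel \<Omega> (\<lambda>\<omega>. c n \<omega> * Rb * f \<omega>)" for n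
      unfolding c_def using \<Omega> fcont
      by (intro set_integrable_continuous_on_compact[of \<Omega>] continuous_intros) auto
    show "c k \<omega> * Rb * f \<omega> \<le> c n \<omega> * Rb * f \<omega>"
      if "k \<in> {1..N}" "n \<in> {1..N}" "\<omega> \<in> argmin_cell \<Omega> N c k" for k n \<omega>
    proof -
      have "c k \<omega> \<le> c n \<omega>" using that(3,2) by (rule argmin_cell_le)
      moreover have "0 < Rb * f \<omega>" using that(3) Rb fpos unfolding argmin_cell_def by auto
      ultimately show ?thesis by (simp add: mult.assoc mult_right_mono)
    qed
  qed (use V W in \<open>auto simp: cell_partition_def disjoint_family_on_def\<close>)
  then show ?thesis
    using Dpow_eq_sum_cell_integral[OF S \<Omega>(1) fcont] V W unfolding V_eq c_def by simp
qed

end
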